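(* Let $m\geq\beta\geq 1$ be integers and let $G^*$ be a graph with maximum $q$ among all graphs in $\mathfrak{G}_{m,\geq\beta}$. Let $X^*$ be a principal eigenvector of $Q(G^* )$ with coordinates $x^*_v$, let $M^*(G^* )=\{u_1v_1,\ldots,u_{\beta(G^* )}v_{\beta(G^* )}\}$ be a matching of $G^*$ extremal to $X^*$, and let $V^*=\{u_i,v_i : i=1,\ldots,\beta(G^* )\}$. Then $x^*_w\leq \min_{v\in V^*}x^*_v$ for every vertex $w\in V(G^* )\setminus V^*$.
   Context: All graphs are finite, simple and undirected (isolated vertices allowed). $Q(G)=D(G)+A(G)$ is the signless Laplacian matrix and $q(G)$ its largest eigenvalue; a principal eigenvector of $Q(G)$ is a nonnegative unit vector $X$ with $Q(G)X=q(G)X$. $\beta(G)$ is the matching number of $G$. $\mathfrak{G}_{m,\geq\beta}$ denotes the set of graphs with exactly $m$ edges and matching number at least $\beta$. For a graph $G$ with at least one edge and a principal eigenvector $X$ (coordinates $x_v$), a matching $M^*(G)$ of $G$ is said to be extremal to $X$ if it is a maximum matching (of size $\beta(G)$) and $\sum_{uv\in M^*(G)}(x_u+x_v)^2=\max_M\sum_{uv\in M}(x_u+x_v)^2$, the maximum taken over all maximum matchings $M$ of $G$. *)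

theory Defs
  imports Complex_Main
begin

definition simple_graph :: "'a set \<Rightarrow> 'a set set \<Rightarrow> bool" where
  "simple_graph V E \<longleftrightarrow> finite V \<and> (\<forall>e\<in>E. \<exists>u v. u \<noteq> v \<and> e = {u, v} \<and> u \<in> V \<and> v \<in> V)"

definition degree :: "'a set set \<Rightarrow> 'a \<Rightarrow> nat" where
  "degree E v = card {e \<in> E. v \<in> e}"

definition adjacent :: "'a set set \<Rightarrow> 'a \<Rightarrow> 'a \<Rightarrow> bool" where
  "adjacent E u v \<longleftrightarrow> {u, v} \<in> E"

definition signless_lap :: "'a set \<Rightarrow> 'a set set \<Rightarrow> ('a \<Rightarrow> real) \<Rightarrow> 'a \<Rightarrow> real" where
  "signless_lap V E X v = real (degree E v) * X v + (\<Sum>u\<in>{u \<in> V. adjacent E v u}. X u)"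

definition is_Q_eigenvalue :: "'a set \<Rightarrow> 'a set set \<Rightarrow> real \<Rightarrow> bool" where
  "is_Q_eigenvalue V E lam \<longleftrightarrow>
     (\<exists>X. (\<exists>v\<in>V. X v \<noteq> 0) \<and> (\<forall>v\<in>V. signless_lap V E X v = lam * X v))"

definition q_index :: "'a set \<Rightarrow> 'a set set \<Rightarrow> real" where
  "q_index V E = Max {lam. is_Q_eigenvalue V E lam}"

definition principal_eigvec :: "'a set \<Rightarrow> 'a set set \<Rightarrow> ('a \<Rightarrow> real) \<Rightarrow> bool" where
  "principal_eigvec V E X \<longleftrightarrow>
     (\<forall>v\<in>V. X v \<ge> 0) \<and> (\<Sum>v\<in>V. (X v)\<^sup>2) = 1 \<and>
     (\<forall>v\<in>V. signless_lap V E X v = q_index V E * X v)"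

definition is_matching :: "'a set set \<Rightarrow> 'a set set \<Rightarrow> bool" where
  "is_matching E M \<longleftrightarrow> M \<subseteq> E \<and> (\<forall>e\<in>M. \<forall>f\<in>M. e \<noteq> f \<longrightarrow> e \<inter> f = {})"

definition matching_number :: "'a set set \<Rightarrow> nat" where
  "matching_number E = Max {card M | M. is_matching E M}"

definition is_max_matching :: "'a set set \<Rightarrow> 'a set set \<Rightarrow> bool" where
  "is_max_matching E M \<longleftrightarrow> is_matching E M \<and> card M = matching_number E"

definition matching_weight :: "('a \<Rightarrow> real) \<Rightarrow> 'a set set \<Rightarrow> real" where
  "matching_weight X M = (\<Sum>e\<in>M. (\<Sum>v\<in>e. X v)\<^sup>2)"

definition extremal_matching :: "'a set set \<Rightarrow> ('a \<Rightarrow> real) \<Rightarrow> 'a set set \<Rightarrow> bool" where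
  "extremal_matching E X M \<longleftrightarrow> is_max_matching E M \<and>
     (\<forall>M'. is_max_matching E M' \<longrightarrow> matching_weight X M' \<le> matching_weight X M)"

definition graph_class :: "nat \<Rightarrow> nat \<Rightarrow> ('a set \<times> 'a set set) set" where
  "graph_class m b = {(V, E). simple_graph V E \<and> card E = m \<and> matching_number E \<ge> b}"

end

theory Submission imports Defs "HOL-Analysis.Analysis" begin

text \<open>Let \<open>uv\<close> be the matching edge at a matched vertex \<open>v\<close>, let \<open>w\<close> be unmatched, and
  exchange \<open>uv\<close> for \<open>uw\<close>. If \<open>uw\<close> is an edge, this gives another maximum matching whose
  weight changes by \<open>(x\<^sub>u + x\<^sub>w)\<^sup>2 - (x\<^sub>u + x\<^sub>v)\<^sup>2\<close>, so extremality forces \<open>x\<^sub>w \<le> x\<^sub>v\<close>.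
  Otherwise, exchanging the edges of the graph keeps \<open>m\<close> edges and matching number at least
  \<open>\<beta>\<close>, and \<open>X\<^sup>T Q X\<close>, the sum of \<open>(x\<^sub>a + x\<^sub>b)\<^sup>2\<close> over the edges \<open>ab\<close>, changes by the
  same amount. By the Rayleigh principle the new graph has \<open>q\<close> at least this value, so the
  maximality of \<open>q(G\<^sup>*)\<close> again forces \<open>x\<^sub>w \<le> x\<^sub>v\<close>. The Rayleigh principle is proved
  directly: the quadratic form attains its maximum on the unit sphere at an eigenvector, and
  there are only finitely many eigenvalues because eigenvectors of distinct eigenvalues are
  orthogonal.\<close>

definition Q_form :: "'a set set \<Rightarrow> ('a \<Rightarrow> real) \<Rightarrow> ('a \<Rightarrow> real) \<Rightarrow> real" where
  "Q_form E Y Z = (\<Sum>e\<in>E. (\<Sum>x\<in>e. Y x) * (\<Sum>x\<in>e. Z x))"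

lemma simple_graph_edgeE:
  assumes "simple_graph V E" "e \<in> E" "x \<in> e"
  obtains y where "y \<noteq> x" "e = {x, y}" "x \<in> V" "y \<in> V"
proof -
  obtain a b where ab: "a \<noteq> b" "e = {a, b}" "a \<in> V" "b \<in> V"
    using assms(1,2) unfolding simple_graph_def by blast
  show thesis
  proof (cases "x = a")
    case True
    then show thesis
      using that[of b] ab by simp
  next
    case False
    then have "x = b"
      using assms(3) ab(2) by simp
    then show thesis
      using that[of a] ab by (simp add: insert_commute)
  qed
qed

lemma simple_graph_edge_subset:
  assumes "simple_graph V E" "e \<in> E"
  shows "e \<subseteq> V"
proof -
  obtain a b where "e = {a, b}" "a \<in> V" "b \<in> V"
    using assms unfolding simple_graph_def by blast
  then show ?thesis
    by simp
qed

lemma simple_graph_finite_edges: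
  assumes "simple_graph V E"
  shows "finite E"
proof (rule finite_subset)
  show "E \<subseteq> Pow V"
    using simple_graph_edge_subset[OF assms] by blast
  show "finite (Pow V)"
    using assms unfolding simple_graph_def by simp
qed

lemma simple_graph_no_loop:
  assumes "simple_graph V E"
  shows "{x} \<notin> E"
proof
  assume "{x} \<in> E"
  then obtain a b where "a \<noteq> b" "{x} = {a, b}"
    using assms unfolding simple_graph_def by blast
  moreover from \<open>{x} = {a, b}\<close> have "a = x" "b = x"
    by (simp_all add: insert_eq_iff)
  ultimately show False
    by simp
qed

lemma simple_graph_exchange:
  assumes sg: "simple_graph V E" and "u \<in> V" "w \<in> V" "u \<noteq> w"
  shows "simple_graph V (insert {u, w} (E - {e}))"
  unfolding simple_graph_def
proof (intro conjI ballI)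
  show "finite V"
    using sg unfolding simple_graph_def by blast
  fix f assume f: "f \<in> insert {u, w} (E - {e})"
  show "\<exists>a b. a \<noteq> b \<and> f = {a, b} \<and> a \<in> V \<and> b \<in> V"
  proof (cases "f = {u, w}")
    case True
    with assms(2-4) show ?thesis
      by blast
  next
    case False
    with f have "f \<in> E"
      by blast
    with sg show ?thesis
      unfolding simple_graph_def by blast
  qed
qed

lemma incident_edges_eq_image:
  assumes "simple_graph V E" "x \<in> V"
  shows "{e \<in> E. x \<in> e} = (\<lambda>u. {x, u}) ` {u \<in> V. adjacent E x u}"
proof
  show "{e \<in> E. x \<in> e} \<subseteq> (\<lambda>u. {x, u}) ` {u \<in> V. adjacent E x u}"
  proof
    fix e assume "e \<in> {e \<in> E. x \<in> e}"
    then obtain y where "e \<in> E" "e = {x, y}" "y \<in> V"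
      using simple_graph_edgeE[OF assms(1)] by blast
    then show "e \<in> (\<lambda>u. {x, u}) ` {u \<in> V. adjacent E x u}"
      by (auto simp: adjacent_def)
  qed
qed (auto simp: adjacent_def)

lemma sum_incident_edges:
  assumes sg: "simple_graph V E" and x: "x \<in> V"
  shows "(\<Sum>e\<in>{e \<in> E. x \<in> e}. \<Sum>y\<in>e. Y y) = signless_lap V E Y x"
proof -
  let ?N = "{u \<in> V. adjacent E x u}"
  have not_x: "\<forall>u\<in>?N. u \<noteq> x"
    using simple_graph_no_loop[OF sg, of x] by (auto simp: adjacent_def)
  have inj: "inj_on (\<lambda>u. {x, u}) ?N"
    by (auto simp: inj_on_def doubleton_eq_iff)
  have "(\<Sum>e\<in>{e \<in> E. x \<in> e}. \<Sum>y\<in>e. Y y) = (\<Sum>u\<in>?N. \<Sum>y\<in>{x, u}. Y y)"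
    by (simp add: incident_edges_eq_image[OF assms] sum.reindex[OF inj])
  also have "\<dots> = (\<Sum>u\<in>?N. Y x + Y u)"
    using not_x by (intro sum.cong refl) auto
  also have "\<dots> = real (card ?N) * Y x + (\<Sum>u\<in>?N. Y u)"
    by (simp add: sum.distrib)
  also have "card ?N = Defs.degree E x"
    unfolding Defs.degree_def incident_edges_eq_image[OF assms] by (simp add: card_image[OF inj])
  finally show ?thesis
    unfolding signless_lap_def by simp
qed

lemma sum_mult_signless_lap:
  assumes sg: "simple_graph V E"
  shows "(\<Sum>v\<in>V. Z v * signless_lap V E Y v) = Q_form E Y Z"
proof -
  have fin: "finite V" "finite E"
    using sg simple_graph_finite_edges unfolding simple_graph_def by auto
  have "Q_form E Y Z = (\<Sum>e\<in>E. \<Sum>x\<in>{x \<in> V. x \<in> e}. Z x * (\<Sum>y\<in>e. Y y))"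
    unfolding Q_form_def
  proof (intro sum.cong refl)
    fix e assume "e \<in> E"
    then have "{x \<in> V. x \<in> e} = e"
      using simple_graph_edge_subset[OF sg] by blast
    then show "(\<Sum>x\<in>e. Y x) * (\<Sum>x\<in>e. Z x) = (\<Sum>x\<in>{x \<in> V. x \<in> e}. Z x * (\<Sum>y\<in>e. Y y))"
      by (simp add: sum_distrib_right[symmetric] mult.commute)
  qed
  also have "\<dots> = (\<Sum>x\<in>V. \<Sum>e\<in>{e \<in> E. x \<in> e}. Z x * (\<Sum>y\<in>e. Y y))"
    by (rule sum.swap_restrict[OF fin(2,1)])
  also have "\<dots> = (\<Sum>x\<in>V. Z x * signless_lap V E Y x)"
    by (intro sum.cong refl) (simp add: sum_distrib_left[symmetric] sum_incident_edges[OF sg])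
  finally show ?thesis ..
qed

lemma Q_form_commute: "Q_form E Y Z = Q_form E Z Y"
  by (simp add: Q_form_def mult.commute)

lemma Q_form_cong:
  "simple_graph V E \<Longrightarrow> \<forall>v\<in>V. Y v = Y' v \<Longrightarrow> \<forall>v\<in>V. Z v = Z' v \<Longrightarrow> Q_form E Y Z = Q_form E Y' Z'"
  unfolding Q_form_def by (intro sum.cong refl arg_cong2[where f = "(*)"]) (auto dest!: simple_graph_edge_subset)

lemma Q_form_scale: "Q_form E (\<lambda>x. c * Y x) (\<lambda>x. c * Y x) = c\<^sup>2 * Q_form E Y Y"
  by (simp add: Q_form_def sum_distrib_left power2_eq_square algebra_simps)

lemma Q_form_add_scaled:
  "Q_form E (\<lambda>x. Y x + t * Z x) (\<lambda>x. Y x + t * Z x) = Q_form E Y Y + 2 * t * Q_form E Y Z + t\<^sup>2 * Q_form E Z Z"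
  by (simp add: Q_form_def sum.distrib sum_distrib_left sum_distrib_right power2_eq_square algebra_simps)

lemma Q_form_exchange:
  assumes "finite F" "a \<in> F" "c \<notin> F"
  shows "Q_form (insert c (F - {a})) X X = Q_form F X X - (\<Sum>x\<in>a. X x)\<^sup>2 + (\<Sum>x\<in>c. X x)\<^sup>2"
proof -
  have "Q_form (insert c (F - {a})) X X = (\<Sum>x\<in>c. X x)\<^sup>2 + Q_form (F - {a}) X X"
    unfolding Q_form_def power2_eq_square using assms by (intro sum.insert) auto
  moreover have "Q_form F X X = (\<Sum>x\<in>a. X x)\<^sup>2 + Q_form (F - {a}) X X"
    unfolding Q_form_def power2_eq_square by (rule sum.remove[OF assms(1,2)])
  ultimately show ?thesis
    by simp
qed

lemma signless_lap_scale: "signless_lap V E (\<lambda>x. c * Y x) v = c * signless_lap V E Y v"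
  by (simp add: signless_lap_def sum_distrib_left algebra_simps)

lemma Q_eigenvectors_orthogonal:
  assumes sg: "simple_graph V E"
    and Y: "\<forall>v\<in>V. signless_lap V E Y v = a * Y v"
    and Z: "\<forall>v\<in>V. signless_lap V E Z v = b * Z v"
    and "a \<noteq> b"
  shows "(\<Sum>v\<in>V. Y v * Z v) = 0"
proof -
  have "a * (\<Sum>v\<in>V. Y v * Z v) = Q_form E Y Z"
    unfolding sum_mult_signless_lap[OF sg, symmetric] sum_distrib_left by (intro sum.cong refl) (simp add: Y)
  also have "\<dots> = Q_form E Z Y"
    by (rule Q_form_commute)
  also have "\<dots> = b * (\<Sum>v\<in>V. Y v * Z v)"
    unfolding sum_mult_signless_lap[OF sg, symmetric] sum_distrib_left by (intro sum.cong refl) (simp add: Z)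
  finally show ?thesis
    using \<open>a \<noteq> b\<close> by simp
qed

lemma orthonormal_sum_sq_coordinate_le_one:
  fixes f :: "'b \<Rightarrow> 'a \<Rightarrow> real"
  assumes fin: "finite V" "finite L" and v: "v \<in> V"
    and orth: "\<forall>a\<in>L. \<forall>b\<in>L. (\<Sum>w\<in>V. f a w * f b w) = (if a = b then 1 else 0)"
  shows "(\<Sum>a\<in>L. (f a v)\<^sup>2) \<le> 1"
proof -
  define P where "P w = (\<Sum>a\<in>L. f a v * f a w)" for w
  define s where "s = (\<Sum>a\<in>L. (f a v)\<^sup>2)"
  have "(\<Sum>w\<in>V. (P w)\<^sup>2) = (\<Sum>w\<in>V. \<Sum>a\<in>L. \<Sum>b\<in>L. (f a v * f b v) * (f a w * f b w))"
    unfolding P_def power2_eq_square sum_product by (simp add: algebra_simps)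
  also have "\<dots> = (\<Sum>a\<in>L. \<Sum>b\<in>L. (f a v * f b v) * (\<Sum>w\<in>V. f a w * f b w))"
    by (simp add: sum.swap[of _ V] sum.swap[of _ V L] sum_distrib_left)
  also have "\<dots> = (\<Sum>a\<in>L. \<Sum>b\<in>L. if a = b then f a v * f b v else 0)"
    using orth by (intro sum.cong refl) simp
  also have "\<dots> = s"
    using fin(2) by (simp add: s_def power2_eq_square)
  finally have norm_P: "(\<Sum>w\<in>V. (P w)\<^sup>2) = s" .
  have "s\<^sup>2 = (P v)\<^sup>2"
    by (simp add: P_def s_def power2_eq_square)
  also have "\<dots> \<le> (\<Sum>w\<in>V. (P w)\<^sup>2)"
    using fin v by (intro member_le_sum) auto
  also have "\<dots> = s"
    by (rule norm_P)
  finally have "s\<^sup>2 \<le> s" .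
  then have "s \<le> 1"
    using mult_le_cancel_left[of s s 1] by (simp add: power2_eq_square) linarith
  then show ?thesis
    unfolding s_def .
qed

lemma card_orthonormal_le:
  fixes f :: "'b \<Rightarrow> 'a \<Rightarrow> real"
  assumes fin: "finite V" "finite L"
    and orth: "\<forall>a\<in>L. \<forall>b\<in>L. (\<Sum>w\<in>V. f a w * f b w) = (if a = b then 1 else 0)"
  shows "card L \<le> card V"
proof -
  have "real (card L) = (\<Sum>a\<in>L. \<Sum>v\<in>V. (f a v)\<^sup>2)"
    using orth by (simp add: power2_eq_square)
  also have "\<dots> = (\<Sum>v\<in>V. \<Sum>a\<in>L. (f a v)\<^sup>2)"
    by (rule sum.swap)
  also have "\<dots> \<le> (\<Sum>v\<in>V. 1)"
    using orthonormal_sum_sq_coordinate_le_one[OF fin _ orth] by (intro sum_mono) auto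
  finally show ?thesis
    by simp
qed

lemma unit_Q_eigenvector:
  assumes "is_Q_eigenvalue V E lam" "finite V"
  obtains Y where "(\<Sum>v\<in>V. (Y v)\<^sup>2) = 1" "\<forall>v\<in>V. signless_lap V E Y v = lam * Y v"
proof -
  obtain Y v where Y: "v \<in> V" "Y v \<noteq> 0" "\<forall>v\<in>V. signless_lap V E Y v = lam * Y v"
    using assms(1) unfolding is_Q_eigenvalue_def by blast
  define n where "n = (\<Sum>v\<in>V. (Y v)\<^sup>2)"
  have "n > 0"
    unfolding n_def using assms(2) Y(1,2) by (intro sum_pos2[of V v]) auto
  define Z where "Z x = inverse (sqrt n) * Y x" for x
  have "(\<Sum>v\<in>V. (Z v)\<^sup>2) = (inverse (sqrt n))\<^sup>2 * n"
    unfolding Z_def n_def by (simp add: power_mult_distrib sum_distrib_left)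
  also have "\<dots> = 1"
    using \<open>n > 0\<close> by (simp add: power_inverse)
  finally have "(\<Sum>v\<in>V. (Z v)\<^sup>2) = 1" .
  moreover have "\<forall>v\<in>V. signless_lap V E Z v = lam * Z v"
    using Y(3) unfolding Z_def by (simp add: signless_lap_scale mult.left_commute)
  ultimately show thesis
    by (rule that)
qed

lemma finite_Q_eigenvalues:
  assumes sg: "simple_graph V E"
  shows "finite {lam. is_Q_eigenvalue V E lam}"
proof (rule ccontr)
  have fV: "finite V"
    using sg unfolding simple_graph_def by blast
  assume "infinite {lam. is_Q_eigenvalue V E lam}"
  then obtain L where L: "finite L" "card L = Suc (card V)" "L \<subseteq> {lam. is_Q_eigenvalue V E lam}"
    using infinite_arbitrarily_large by blast
  have "\<forall>a\<in>L. \<exists>Y. (\<Sum>v\<in>V. (Y v)\<^sup>2) = 1 \<and> (\<forall>v\<in>V. signless_lap V E Y v = a * Y v)"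
  proof
    fix a assume "a \<in> L"
    then have "is_Q_eigenvalue V E a"
      using L(3) by blast
    then obtain Y where "(\<Sum>v\<in>V. (Y v)\<^sup>2) = 1" "\<forall>v\<in>V. signless_lap V E Y v = a * Y v"
      using unit_Q_eigenvector[OF _ fV] by blast
    then show "\<exists>Y. (\<Sum>v\<in>V. (Y v)\<^sup>2) = 1 \<and> (\<forall>v\<in>V. signless_lap V E Y v = a * Y v)"
      by blast
  qed
  from bchoice[OF this] obtain f
    where f: "\<forall>a\<in>L. (\<Sum>v\<in>V. (f a v)\<^sup>2) = 1 \<and> (\<forall>v\<in>V. signless_lap V E (f a) v = a * f a v)"
    by blast
  have "(\<Sum>w\<in>V. f a w * f b w) = (if a = b then 1 else 0)" if "a \<in> L" "b \<in> L" for a b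
  proof (cases "a = b")
    case True
    then show ?thesis
      using f that by (simp add: power2_eq_square)
  next
    case False
    have "\<forall>v\<in>V. signless_lap V E (f a) v = a * f a v" "\<forall>v\<in>V. signless_lap V E (f b) v = b * f b v"
      using f that by blast+
    from Q_eigenvectors_orthogonal[OF sg this False] False show ?thesis
      by simp
  qed
  then have "card L \<le> card V"
    using card_orthonormal_le[OF fV L(1)] by blast
  with L(2) show False
    by simp
qed

lemma linear_coeff_zero_if_quadratic_nonpos:
  fixes b c :: real
  assumes nonpos: "\<And>t. 2 * t * b + t\<^sup>2 * c \<le> 0"
  shows "b = 0"
proof (rule ccontr)
  assume "b \<noteq> 0"
  define k where "k = \<bar>c\<bar> + 1"
  have "k > 0"
    unfolding k_def by simp
  have "2 * k + c > 0"
    unfolding k_def by (simp add: abs_if)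
  have "(2 * (b / k) * b + (b / k)\<^sup>2 * c) * k\<^sup>2 = b\<^sup>2 * (2 * k + c)"
    using \<open>k > 0\<close> by (simp add: field_simps power2_eq_square)
  moreover have "(2 * (b / k) * b + (b / k)\<^sup>2 * c) * k\<^sup>2 \<le> 0"
    using nonpos[of "b / k"] by (simp add: mult_nonpos_nonneg)
  ultimately show False
    using \<open>b \<noteq> 0\<close> \<open>2 * k + c > 0\<close> by (simp add: mult_le_0_iff)
qed

lemma Q_form_attains_max_on_unit_sphere:
  assumes sg: "simple_graph V E" and "V \<noteq> {}"
  obtains Y where "(\<Sum>v\<in>V. (Y v)\<^sup>2) = 1"
    and "\<And>W. (\<Sum>v\<in>V. (W v)\<^sup>2) = 1 \<Longrightarrow> Q_form E W W \<le> Q_form E Y Y"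
proof -
  have fV: "finite V"
    using sg unfolding simple_graph_def by blast
  \<comment> \<open>compactness is taken in the product topology, so vectors are extended by \<open>0\<close> outside \<open>V\<close>\<close>
  let ?zero_out = "\<lambda>W x. if x \<in> V then W x else 0"
  define S where "S v = (if v \<in> V then {-1..1} else {0::real})" for v
  define K where "K = Pi UNIV S \<inter> {Y. (\<Sum>v\<in>V. (Y v)\<^sup>2) = 1}"
  have "compactin (product_topology (\<lambda>i. euclidean) UNIV) (PiE UNIV S)"
    by (subst compactin_PiE) (auto simp: S_def)
  then have "compact (Pi UNIV S)"
    by (simp add: euclidean_product_topology PiE_UNIV_domain)
  moreover have "closed {Y :: 'a \<Rightarrow> real. (\<Sum>v\<in>V. (Y v)\<^sup>2) = 1}"
    by (intro closed_Collect_eq continuous_intros continuous_on_product_coordinates)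
  ultimately have "compact K"
    unfolding K_def by (rule compact_Int_closed)
  have in_K: "?zero_out W \<in> K" if W: "(\<Sum>v\<in>V. (W v)\<^sup>2) = 1" for W
  proof -
    have "\<bar>W v\<bar> \<le> 1" if "v \<in> V" for v
    proof -
      have "(W v)\<^sup>2 \<le> 1\<^sup>2"
        using W fV that member_le_sum[of v V "\<lambda>v. (W v)\<^sup>2"] by simp
      then show ?thesis
        using abs_le_square_iff[of "W v" 1] by simp
    qed
    then show ?thesis
      unfolding K_def S_def using W by (auto simp: abs_le_iff)
  qed
  obtain v where "v \<in> V"
    using \<open>V \<noteq> {}\<close> by blast
  have "(\<Sum>w\<in>V. (of_bool (w = v))\<^sup>2) = (1 :: real)"
    using fV \<open>v \<in> V\<close> by (simp add: power2_eq_square)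
  from in_K[OF this] have "K \<noteq> {}"
    by blast
  moreover have "continuous_on K (\<lambda>Y. Q_form E Y Y)"
  proof -
    have "continuous_on K (\<lambda>Y :: 'a \<Rightarrow> real. Y x)" for x
      by (rule continuous_on_subset[OF continuous_on_product_coordinates]) simp
    then show ?thesis
      unfolding Q_form_def by (intro continuous_intros)
  qed
  ultimately obtain Y where "Y \<in> K" and Y_max: "\<And>Z. Z \<in> K \<Longrightarrow> Q_form E Z Z \<le> Q_form E Y Y"
    using continuous_attains_sup[OF \<open>compact K\<close>] by blast
  show thesis
  proof (rule that)
    show "(\<Sum>v\<in>V. (Y v)\<^sup>2) = 1"
      using \<open>Y \<in> K\<close> unfolding K_def by blast
    fix W :: "'a \<Rightarrow> real"
    assume "(\<Sum>v\<in>V. (W v)\<^sup>2) = 1"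
    moreover have "Q_form E W W = Q_form E (?zero_out W) (?zero_out W)"
      by (rule Q_form_cong[OF sg]) auto
    ultimately show "Q_form E W W \<le> Q_form E Y Y"
      using Y_max in_K by simp
  qed
qed

lemma Q_form_le_mult_norm_sq:
  assumes sg: "simple_graph V E"
    and unit_max: "\<And>W. (\<Sum>v\<in>V. (W v)\<^sup>2) = 1 \<Longrightarrow> Q_form E W W \<le> mu"
  shows "Q_form E W W \<le> mu * (\<Sum>v\<in>V. (W v)\<^sup>2)"
proof -
  have fV: "finite V"
    using sg unfolding simple_graph_def by blast
  define n where "n = (\<Sum>v\<in>V. (W v)\<^sup>2)"
  show ?thesis
  proof (cases "n = 0")
    case True
    then have "\<forall>v\<in>V. W v = 0"
      using fV by (simp add: n_def sum_nonneg_eq_0_iff)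
    then have "Q_form E W W = Q_form E (\<lambda>_. 0) (\<lambda>_. 0)"
      by (intro Q_form_cong[OF sg]) auto
    then show ?thesis
      using True by (simp add: n_def Q_form_def)
  next
    case False
    then have "n > 0"
      unfolding n_def by (simp add: order_le_neq_trans sum_nonneg)
    define c where "c = inverse (sqrt n)"
    have "c\<^sup>2 * n = 1"
      unfolding c_def using \<open>n > 0\<close> by (simp add: power_inverse)
    moreover have "(\<Sum>v\<in>V. (c * W v)\<^sup>2) = c\<^sup>2 * n"
      unfolding n_def by (simp add: power_mult_distrib sum_distrib_left)
    ultimately have "c\<^sup>2 * Q_form E W W \<le> mu"
      using unit_max[of "\<lambda>x. c * W x"] by (simp add: Q_form_scale)
    then have "c\<^sup>2 * n * Q_form E W W \<le> mu * n"
      using \<open>n > 0\<close> by (simp add: mult.commute mult.left_commute mult_right_mono)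
    then show ?thesis
      using \<open>c\<^sup>2 * n = 1\<close> by (simp add: n_def)
  qed
qed

lemma Q_form_maximizer_eigenvector:
  assumes sg: "simple_graph V E"
    and bound: "\<And>W. Q_form E W W \<le> mu * (\<Sum>v\<in>V. (W v)\<^sup>2)"
    and attained: "Q_form E Y Y = mu * (\<Sum>v\<in>V. (Y v)\<^sup>2)"
    and v: "v \<in> V"
  shows "signless_lap V E Y v = mu * Y v"
proof -
  have fV: "finite V"
    using sg unfolding simple_graph_def by blast
  define Z where "Z x = (of_bool (x = v) :: real)" for x
  have YZ: "(\<Sum>x\<in>V. Y x * Z x) = Y v" and ZZ: "(\<Sum>x\<in>V. (Z x)\<^sup>2) = 1"
    using fV v by (simp_all add: Z_def power2_eq_square)
  have "Q_form E Y Z = (\<Sum>x\<in>V. Z x * signless_lap V E Y x)"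
    by (rule sum_mult_signless_lap[OF sg, symmetric])
  also have "\<dots> = signless_lap V E Y v"
    using fV v by (simp add: Z_def)
  finally have YZ_lap: "Q_form E Y Z = signless_lap V E Y v" .
  have "2 * t * (Q_form E Y Z - mu * Y v) + t\<^sup>2 * (Q_form E Z Z - mu) \<le> 0" for t
  proof -
    have "(\<Sum>x\<in>V. (Y x + t * Z x)\<^sup>2)
        = (\<Sum>x\<in>V. (Y x)\<^sup>2) + 2 * t * (\<Sum>x\<in>V. Y x * Z x) + t\<^sup>2 * (\<Sum>x\<in>V. (Z x)\<^sup>2)"
      by (simp add: power2_eq_square algebra_simps sum.distrib sum_distrib_left)
    then show ?thesis
      using bound[of "\<lambda>x. Y x + t * Z x"] attained YZ ZZ
      by (simp add: Q_form_add_scaled algebra_simps)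
  qed
  then have "Q_form E Y Z - mu * Y v = 0"
    by (rule linear_coeff_zero_if_quadratic_nonpos)
  then show ?thesis
    using YZ_lap by simp
qed

lemma Q_eigenvalue_ge_Q_form:
  assumes sg: "simple_graph V E" and unit: "(\<Sum>v\<in>V. (X v)\<^sup>2) = 1"
  obtains mu where "is_Q_eigenvalue V E mu" and "Q_form E X X \<le> mu"
proof -
  have "V \<noteq> {}"
    using unit by auto
  then obtain Y where Y_unit: "(\<Sum>v\<in>V. (Y v)\<^sup>2) = 1"
    and Y_max: "\<And>W. (\<Sum>v\<in>V. (W v)\<^sup>2) = 1 \<Longrightarrow> Q_form E W W \<le> Q_form E Y Y"
    using Q_form_attains_max_on_unit_sphere[OF sg] by blast
  have "\<forall>v\<in>V. signless_lap V E Y v = Q_form E Y Y * Y v"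
    using Q_form_maximizer_eigenvector[OF sg Q_form_le_mult_norm_sq[OF sg Y_max]] Y_unit
    by simp
  moreover have "\<exists>v\<in>V. Y v \<noteq> 0"
    using Y_unit by (metis (no_types, lifting) power_zero_numeral sum.neutral zero_neq_one)
  ultimately have "is_Q_eigenvalue V E (Q_form E Y Y)"
    unfolding is_Q_eigenvalue_def by blast
  then show thesis
    using that Y_max[OF unit] by blast
qed

lemma Q_form_le_q_index:
  assumes sg: "simple_graph V E" and unit: "(\<Sum>v\<in>V. (X v)\<^sup>2) = 1"
  shows "Q_form E X X \<le> q_index V E"
proof -
  obtain mu where "is_Q_eigenvalue V E mu" "Q_form E X X \<le> mu"
    using Q_eigenvalue_ge_Q_form[OF assms] .
  moreover have "mu \<le> q_index V E"
    unfolding q_index_def using calculation(1) finite_Q_eigenvalues[OF sg] by (intro Max_ge) auto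
  ultimately show ?thesis
    by linarith
qed

lemma principal_eigvec_Q_form:
  assumes sg: "simple_graph V E" and X: "principal_eigvec V E X"
  shows "Q_form E X X = q_index V E"
proof -
  have "Q_form E X X = (\<Sum>v\<in>V. X v * signless_lap V E X v)"
    by (rule sum_mult_signless_lap[OF sg, symmetric])
  also have "\<dots> = (\<Sum>v\<in>V. q_index V E * (X v)\<^sup>2)"
    using X unfolding principal_eigvec_def by (intro sum.cong refl) (simp add: power2_eq_square)
  also have "\<dots> = q_index V E"
    using X unfolding principal_eigvec_def by (simp add: sum_distrib_left[symmetric])
  finally show ?thesis .
qed

lemma matching_weight_eq_Q_form: "matching_weight X M = Q_form M X X"
  by (simp add: matching_weight_def Q_form_def power2_eq_square)

lemma card_le_matching_number:
  assumes "finite E" "is_matching E M"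
  shows "card M \<le> matching_number E"
proof -
  have "{card M |M. is_matching E M} \<subseteq> card ` Pow E"
    by (auto simp: is_matching_def)
  moreover have "finite (card ` Pow E)"
    using assms(1) by simp
  ultimately have "finite {card M |M. is_matching E M}"
    by (rule finite_subset)
  then show ?thesis
    unfolding matching_number_def using assms(2) by (intro Max_ge) auto
qed

lemma card_exchange:
  assumes "finite A" "a \<in> A" "c \<notin> A"
  shows "card (insert c (A - {a})) = card A"
proof -
  have "card A > 0"
    using assms(1,2) card_gt_0_iff by blast
  then show ?thesis
    using assms by simp
qed

lemma is_matching_exchange:
  assumes "is_matching E M" "e \<in> M" "u \<in> e" "w \<notin> \<Union>M" "insert {u, w} (M - {e}) \<subseteq> F"
  shows "is_matching F (insert {u, w} (M - {e}))"
proof -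
  have disj: "\<forall>f\<in>M. \<forall>g\<in>M. f \<noteq> g \<longrightarrow> f \<inter> g = {}"
    using assms(1) unfolding is_matching_def by blast
  have "f \<inter> {u, w} = {}" if "f \<in> M - {e}" for f
  proof -
    have "u \<notin> f"
      using disj that assms(2,3) by blast
    moreover have "w \<notin> f"
      using that assms(4) by blast
    ultimately show ?thesis
      by blast
  qed
  then show ?thesis
    unfolding is_matching_def using disj assms(5) by blast
qed

lemma extremal_matching_exchange:
  assumes ext: "extremal_matching E X M" and "finite E"
    and e: "e \<in> M" "u \<in> e" and w: "w \<notin> \<Union>M" and "{u, w} \<in> E"
  shows "(\<Sum>x\<in>{u, w}. X x)\<^sup>2 \<le> (\<Sum>x\<in>e. X x)\<^sup>2"
proof -
  let ?M' = "insert {u, w} (M - {e})"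
  have M: "is_matching E M" "card M = matching_number E"
    and best: "\<And>M'. is_max_matching E M' \<Longrightarrow> matching_weight X M' \<le> matching_weight X M"
    using ext unfolding extremal_matching_def is_max_matching_def by auto
  have "finite M" "{u, w} \<notin> M"
    using M(1) \<open>finite E\<close> w unfolding is_matching_def by (auto intro: finite_subset)
  moreover have "?M' \<subseteq> E"
    using M(1) \<open>{u, w} \<in> E\<close> unfolding is_matching_def by blast
  ultimately have "is_max_matching E ?M'"
    unfolding is_max_matching_def
    using is_matching_exchange[OF M(1) e w] card_exchange[OF _ e(1)] M(2) by simp
  then have "matching_weight X ?M' \<le> matching_weight X M"
    by (rule best)
  then show ?thesis
    using Q_form_exchange[OF \<open>finite M\<close> e(1) \<open>{u, w} \<notin> M\<close>] by (simp add: matching_weight_eq_Q_form)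
qed

lemma q_index_maximal_exchange:
  fixes V :: "'a set"
  assumes G: "(V, E) \<in> graph_class m b"
    and q_max: "\<forall>(V' :: 'a set, E') \<in> graph_class m b. q_index V' E' \<le> q_index V E"
    and X: "principal_eigvec V E X" and M: "is_max_matching E M"
    and e: "e \<in> M" "u \<in> e" and w: "w \<in> V - \<Union>M" and "u \<noteq> w" and "{u, w} \<notin> E"
  shows "(\<Sum>x\<in>{u, w}. X x)\<^sup>2 \<le> (\<Sum>x\<in>e. X x)\<^sup>2"
proof -
  let ?E' = "insert {u, w} (E - {e})" and ?M' = "insert {u, w} (M - {e})"
  have sg: "simple_graph V E" and "card E = m" and "b \<le> matching_number E"
    using G unfolding graph_class_def by auto
  have "finite E"
    using sg by (rule simple_graph_finite_edges)
  have "e \<in> E" "M \<subseteq> E"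
    using M e unfolding is_max_matching_def is_matching_def by auto
  then have "u \<in> V"
    using simple_graph_edge_subset[OF sg] e by blast
  have sg': "simple_graph V ?E'"
    using simple_graph_exchange[OF sg \<open>u \<in> V\<close> _ \<open>u \<noteq> w\<close>] w by blast
  have "finite M" "{u, w} \<notin> M"
    using \<open>M \<subseteq> E\<close> \<open>finite E\<close> w by (auto intro: finite_subset)
  have "is_matching ?E' ?M'"
    using M \<open>M \<subseteq> E\<close> e w unfolding is_max_matching_def by (intro is_matching_exchange) auto
  then have "card ?M' \<le> matching_number ?E'"
    using card_le_matching_number simple_graph_finite_edges[OF sg'] by blast
  moreover have "card ?M' = matching_number E"
    using M card_exchange[OF \<open>finite M\<close> e(1) \<open>{u, w} \<notin> M\<close>] unfolding is_max_matching_def by simp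
  moreover have "card ?E' = m"
    using card_exchange[OF \<open>finite E\<close> \<open>e \<in> E\<close> \<open>{u, w} \<notin> E\<close>] \<open>card E = m\<close> by simp
  ultimately have "(V, ?E') \<in> graph_class m b"
    using sg' \<open>b \<le> matching_number E\<close> unfolding graph_class_def by auto
  from bspec[OF q_max this] have "q_index V ?E' \<le> q_index V E"
    by simp
  moreover have "Q_form ?E' X X \<le> q_index V ?E'"
    using X sg' Q_form_le_q_index unfolding principal_eigvec_def by blast
  moreover have "Q_form ?E' X X = q_index V E - (\<Sum>x\<in>e. X x)\<^sup>2 + (\<Sum>x\<in>{u, w}. X x)\<^sup>2"
    using Q_form_exchange[OF \<open>finite E\<close> \<open>e \<in> E\<close> \<open>{u, w} \<notin> E\<close>] principal_eigvec_Q_form[OF sg X] by simp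
  ultimately show ?thesis
    by linarith
qed

lemma exchanged_edge_weight_le:
  fixes V :: "'a set"
  assumes G: "(V, E) \<in> graph_class m b"
    and q_max: "\<forall>(V' :: 'a set, E') \<in> graph_class m b. q_index V' E' \<le> q_index V E"
    and X: "principal_eigvec V E X" and ext: "extremal_matching E X M"
    and e: "e \<in> M" "u \<in> e" and w: "w \<in> V - \<Union>M"
  shows "(\<Sum>x\<in>{u, w}. X x)\<^sup>2 \<le> (\<Sum>x\<in>e. X x)\<^sup>2"
proof (cases "{u, w} \<in> E")
  case True
  have "simple_graph V E"
    using G unfolding graph_class_def by simp
  then have "finite E"
    by (rule simple_graph_finite_edges)
  from w have "w \<notin> \<Union>M"
    by blast
  from extremal_matching_exchange[OF ext \<open>finite E\<close> e this True] show ?thesis .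
next
  case False
  have M: "is_max_matching E M"
    using ext unfolding extremal_matching_def by simp
  have "u \<noteq> w"
    using e w by blast
  from q_index_maximal_exchange[OF G q_max X M e w this False] show ?thesis .
qed

theorem lemma2p2:
  fixes m b :: nat and V :: "'a set" and E :: "'a set set"
    and X :: "'a \<Rightarrow> real" and M :: "'a set set"
  assumes "infinite (UNIV :: 'a set)"
    and "1 \<le> b" and "b \<le> m"
    and "(V, E) \<in> graph_class m b"
    and "\<forall>(V' :: 'a set, E') \<in> graph_class m b. q_index V' E' \<le> q_index V E"
    and "principal_eigvec V E X"
    and "extremal_matching E X M"
  shows "\<forall>w \<in> V - \<Union>M. \<forall>v \<in> \<Union>M. X w \<le> X v"
proof (intro ballI)
  fix w v assume w: "w \<in> V - \<Union>M" and "v \<in> \<Union>M"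
  then obtain e where e: "e \<in> M" "v \<in> e"
    by blast
  have sg: "simple_graph V E"
    using assms(4) unfolding graph_class_def by simp
  have "e \<in> E"
    using assms(7) e(1) unfolding extremal_matching_def is_max_matching_def is_matching_def by blast
  obtain u where "u \<noteq> v" and e_eq: "e = {v, u}" and "v \<in> V" "u \<in> V"
    by (rule simple_graph_edgeE[OF sg \<open>e \<in> E\<close> e(2)])
  then have "u \<in> e" "u \<noteq> w"
    using w e(1) by auto
  with exchanged_edge_weight_le[OF assms(4-7) e(1) \<open>u \<in> e\<close> w] \<open>u \<noteq> v\<close> e_eq
  have "(X u + X w)\<^sup>2 \<le> (X v + X u)\<^sup>2"
    by simp
  moreover have "0 \<le> X v + X u"
    using assms(6) \<open>u \<in> V\<close> \<open>v \<in> V\<close> unfolding principal_eigvec_def by auto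
  ultimately have "X u + X w \<le> X v + X u"
    by (rule power2_le_imp_le)
  then show "X w \<le> X v"
    by simp
qed

end
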